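(* Let $V=\{1,\dots,n\}$ be the node set of a directed graph and, for each realization $z$ (a random simulation of an Independent Cascade process), let $P_v^z\subseteq V$ be the set of nodes reachable from $v$. Define $g_z(\mathbf{x})=\sum_{v\in V}\frac1n\big(1-\prod_{i\in P_v^z}(1-x_i)\big)$ and $f_z(\mathbf{x})=h(g_z(\mathbf{x}))$ with $h(s)=\log(1+s)$, and $f(\mathbf{x})=\mathbb{E}_{z\sim P}[f_z(\mathbf{x})]$. Let $\hat h^L(s)=\sum_{\ell=0}^L\frac{h^{(\ell)}(1/2)}{\ell!}(s-1/2)^\ell$ and $\hat f_z^L(\mathbf{x})=\hat h^L(g_z(\mathbf{x}))$. Let $G_z$ be the multilinear relaxation of $f_z$ and $\widehat{\nabla G_z^L}$ the polynomial estimator built from $\hat f_z^L$. Then for all $\mathbf{y}\in[0,1]^n$, $$\big\|\nabla G_z(\mathbf{y})-\widehat{\nabla G_z^L}(\mathbf{y})\big\|_2\le\frac{\sqrt n}{(L+1)2^L}.$$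
   Context: $G_z(\mathbf{y})=\mathbb{E}_{\mathbf{x}\sim\mathbf{y}}[f_z(\mathbf{x})]$ where $\mathbf{x}\sim\mathbf{y}$ has independent Bernoulli$(y_i)$ coordinates. For a polynomial $p(\mathbf{y})=c_0+\sum_\ell c_\ell\prod_{i\in J_\ell}y_i^{k_i^\ell}$ ($k_i^\ell\ge1$), its multilinearization is $\dot p(\mathbf{y})=c_0+\sum_\ell c_\ell\prod_{i\in J_\ell}y_i$. The polynomial estimator is $\big(\widehat{\nabla G_z^L}(\mathbf{y})\big)_i=\dot{\hat f}{}_z^L([\mathbf{y}]_{+i})-\dot{\hat f}{}_z^L([\mathbf{y}]_{-i})$, where $[\mathbf{y}]_{+i}$, $[\mathbf{y}]_{-i}$ denote $\mathbf{y}$ with coordinate $i$ set to $1$, $0$. *)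

theory Defs
  imports "HOL-Analysis.Analysis" "HOL-Library.Poly_Mapping"
begin

type_synonym 'n mpoly = "('n \<Rightarrow>\<^sub>0 nat) \<Rightarrow>\<^sub>0 real"

definition pconst :: "real \<Rightarrow> 'n mpoly" where
  "pconst c = Poly_Mapping.single 0 c"

definition pvar :: "'n \<Rightarrow> 'n mpoly" where
  "pvar i = Poly_Mapping.single (Poly_Mapping.single i 1) 1"

text \<open>Multilinearization evaluated at y: every power y_i^k (k \<ge> 1) is replaced by y_i.\<close>
definition mlin_eval :: "'n mpoly \<Rightarrow> (real ^ 'n) \<Rightarrow> real" where
  "mlin_eval p y = (\<Sum>m\<in>Poly_Mapping.keys p. Poly_Mapping.lookup p m * (\<Prod>i\<in>Poly_Mapping.keys m. y $ i))"

definition vupd :: "real ^ 'n \<Rightarrow> 'n \<Rightarrow> real \<Rightarrow> real ^ 'n" where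
  "vupd y i t = (\<chi> j. if j = i then t else y $ j)"

definition reach :: "('n \<Rightarrow> 'n \<Rightarrow> bool) \<Rightarrow> 'n \<Rightarrow> 'n set" where
  "reach E v = {u. E\<^sup>*\<^sup>* v u}"

definition h :: "real \<Rightarrow> real" where
  "h s = ln (1 + s)"

definition g_z :: "('n::finite \<Rightarrow> 'n \<Rightarrow> bool) \<Rightarrow> real ^ 'n \<Rightarrow> real" where
  "g_z E x = (\<Sum>v\<in>UNIV. (1 / real CARD('n)) * (1 - (\<Prod>i\<in>reach E v. 1 - x $ i)))"

definition f_z :: "('n::finite \<Rightarrow> 'n \<Rightarrow> bool) \<Rightarrow> real ^ 'n \<Rightarrow> real" where
  "f_z E x = h (g_z E x)"

definition g_poly :: "('n::finite \<Rightarrow> 'n \<Rightarrow> bool) \<Rightarrow> 'n mpoly" where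
  "g_poly E = (\<Sum>v\<in>UNIV. pconst (1 / real CARD('n)) *
                 (1 - (\<Prod>i\<in>reach E v. 1 - pvar i)))"

definition taylor_coeff :: "nat \<Rightarrow> real" where
  "taylor_coeff l = (deriv ^^ l) h (1/2) / fact l"

definition h_hat :: "nat \<Rightarrow> real \<Rightarrow> real" where
  "h_hat L s = (\<Sum>l\<le>L. taylor_coeff l * (s - 1/2) ^ l)"

definition f_hat_poly :: "nat \<Rightarrow> ('n::finite \<Rightarrow> 'n \<Rightarrow> bool) \<Rightarrow> 'n mpoly" where
  "f_hat_poly L E = (\<Sum>l\<le>L. pconst (taylor_coeff l) * (g_poly E - pconst (1/2)) ^ l)"

text \<open>Multilinear relaxation G_z(y) = E_{x ~ y}[f_z(x)], x with independent Bernoulli(y_i)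
  coordinates, written as the explicit finite expectation (polynomial in y).\<close>
definition G_z :: "('n::finite \<Rightarrow> 'n \<Rightarrow> bool) \<Rightarrow> real ^ 'n \<Rightarrow> real" where
  "G_z E y = (\<Sum>x\<in>(UNIV :: ('n \<Rightarrow> bool) set).
      (\<Prod>i\<in>UNIV. if x i then y $ i else 1 - y $ i) * f_z E (\<chi> i. if x i then 1 else 0))"

definition grad :: "(real ^ 'n \<Rightarrow> real) \<Rightarrow> real ^ 'n \<Rightarrow> real ^ 'n" where
  "grad F y = (\<chi> i. deriv (\<lambda>t. F (vupd y i t)) (y $ i))"

definition grad_est :: "nat \<Rightarrow> ('n::finite \<Rightarrow> 'n \<Rightarrow> bool) \<Rightarrow> real ^ 'n \<Rightarrow> real ^ 'n" where
  "grad_est L E y = (\<chi> i. mlin_eval (f_hat_poly L E) (vupd y i 1)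
                         - mlin_eval (f_hat_poly L E) (vupd y i 0))"

end

theory Submission imports Defs begin

text \<open>Both G_z and the multilinearized estimator are expectations over a vertex x of the cube
  with independent Bernoulli(y_i) coordinates: G_z averages h (g_z x), and a multilinear
  polynomial is the average of its values at the vertices, where the multilinearization of
  h_hat^L (g_z x) is h_hat^L (g_z x) itself. Both are affine in each y_i, so each partial
  derivative is the difference of the values at y_i = 1 and y_i = 0. Since g_z maps vertices into
  [0, 1] and the (L+1)-st derivative of ln (1 + s) is bounded by L! for s \<ge> 0, the Lagrange
  remainder at 1/2 bounds each of these values' error by 1 / ((L+1) 2^(L+1)); so each coordinate
  of the gradient error is at most 1 / ((L+1) 2^L), and its norm at most sqrt n times that.\<close>

section \<open>Evaluating polynomials through multiplicative monomial weights\<close>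

text \<open>Ordinary evaluation at y is mpoly_eval with the weight prod_i y_i^(m_i); the multilinear
  evaluation mlin_eval uses the weight prod_(i in keys m) y_i, which is multiplicative only at
  0/1-points.\<close>

definition mpoly_eval :: "(('n \<Rightarrow>\<^sub>0 nat) \<Rightarrow> real) \<Rightarrow> 'n mpoly \<Rightarrow> real" where
  "mpoly_eval ch p = (\<Sum>m\<in>Poly_Mapping.keys p. Poly_Mapping.lookup p m * ch m)"

definition monomial_hom :: "(('n \<Rightarrow>\<^sub>0 nat) \<Rightarrow> real) \<Rightarrow> bool" where
  "monomial_hom ch \<longleftrightarrow> ch 0 = 1 \<and> (\<forall>a b. ch (a + b) = ch a * ch b)"

lemma mpoly_eval_superset:
  assumes "finite S" "Poly_Mapping.keys p \<subseteq> S"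
  shows "mpoly_eval ch p = (\<Sum>m\<in>S. Poly_Mapping.lookup p m * ch m)"
  unfolding mpoly_eval_def
  by (rule sum.mono_neutral_left) (use assms in \<open>auto simp: in_keys_iff\<close>)

lemma mpoly_eval_zero [simp]: "mpoly_eval ch 0 = 0"
  by (simp add: mpoly_eval_def)

lemma mpoly_eval_single: "mpoly_eval ch (Poly_Mapping.single m c) = c * ch m"
  by (simp add: mpoly_eval_def)

lemma mpoly_eval_add: "mpoly_eval ch (p + q) = mpoly_eval ch p + mpoly_eval ch q"
proof -
  let ?S = "Poly_Mapping.keys p \<union> Poly_Mapping.keys q"
  have "mpoly_eval ch (p + q) = (\<Sum>m\<in>?S. Poly_Mapping.lookup (p + q) m * ch m)"
    by (rule mpoly_eval_superset) (use keys_add[of p q] in auto)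
  also have "\<dots> = (\<Sum>m\<in>?S. Poly_Mapping.lookup p m * ch m) + (\<Sum>m\<in>?S. Poly_Mapping.lookup q m * ch m)"
    by (simp add: lookup_add distrib_right sum.distrib)
  also have "\<dots> = mpoly_eval ch p + mpoly_eval ch q"
    by (simp add: mpoly_eval_superset[of ?S p ch] mpoly_eval_superset[of ?S q ch])
  finally show ?thesis .
qed

lemma mpoly_eval_diff: "mpoly_eval ch (p - q) = mpoly_eval ch p - mpoly_eval ch q"
proof -
  have "mpoly_eval ch (- q) = - mpoly_eval ch q"
    by (simp add: mpoly_eval_def sum_negf)
  then show ?thesis
    using mpoly_eval_add[of ch p "- q"] by simp
qed

lemma mpoly_eval_sum: "mpoly_eval ch (sum f A) = (\<Sum>a\<in>A. mpoly_eval ch (f a))"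
  by (induction A rule: infinite_finite_induct) (auto simp: mpoly_eval_add)

lemma poly_mapping_sum_single:
  "(p :: 'a \<Rightarrow>\<^sub>0 'b::comm_monoid_add) =
     (\<Sum>a\<in>Poly_Mapping.keys p. Poly_Mapping.single a (Poly_Mapping.lookup p a))"
  by (rule poly_mapping_eqI) (simp add: lookup_sum lookup_single when_def in_keys_iff)

lemma mpoly_eval_mult:
  assumes "monomial_hom ch"
  shows "mpoly_eval ch (p * q) = mpoly_eval ch p * mpoly_eval ch q"
proof -
  have "p * q = (\<Sum>a\<in>Poly_Mapping.keys p. \<Sum>b\<in>Poly_Mapping.keys q.
      Poly_Mapping.single (a + b) (Poly_Mapping.lookup p a * Poly_Mapping.lookup q b))"
    by (subst (1 2) poly_mapping_sum_single) (simp add: sum_product mult_single)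
  then have "mpoly_eval ch (p * q) = (\<Sum>a\<in>Poly_Mapping.keys p. \<Sum>b\<in>Poly_Mapping.keys q.
      (Poly_Mapping.lookup p a * ch a) * (Poly_Mapping.lookup q b * ch b))"
    using assms by (simp add: monomial_hom_def mpoly_eval_sum mpoly_eval_single mult_ac)
  then show ?thesis
    by (simp add: mpoly_eval_def sum_product)
qed

lemma mpoly_eval_one: "monomial_hom ch \<Longrightarrow> mpoly_eval ch 1 = 1"
  by (simp add: mpoly_eval_def monomial_hom_def)

lemma mpoly_eval_prod:
  "monomial_hom ch \<Longrightarrow> mpoly_eval ch (prod f A) = (\<Prod>a\<in>A. mpoly_eval ch (f a))"
  by (induction A rule: infinite_finite_induct) (simp_all add: mpoly_eval_one mpoly_eval_mult)

lemma mpoly_eval_power: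
  "monomial_hom ch \<Longrightarrow> mpoly_eval ch (p ^ k) = mpoly_eval ch p ^ k"
  by (induction k) (simp_all add: mpoly_eval_one mpoly_eval_mult)

lemma mpoly_eval_pconst: "monomial_hom ch \<Longrightarrow> mpoly_eval ch (pconst c) = c"
  by (simp add: pconst_def mpoly_eval_single monomial_hom_def)

lemma mpoly_eval_pvar: "mpoly_eval ch (pvar i) = ch (Poly_Mapping.single i 1)"
  by (simp add: pvar_def mpoly_eval_single)

section \<open>Multilinear evaluation at the vertices of the cube\<close>

definition bool_vec :: "('n::finite \<Rightarrow> bool) \<Rightarrow> real ^ 'n" where
  "bool_vec x = (\<chi> i. if x i then 1 else 0)"

definition mlin_weight :: "real ^ 'n \<Rightarrow> ('n \<Rightarrow>\<^sub>0 nat) \<Rightarrow> real" where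
  "mlin_weight y m = (\<Prod>i\<in>Poly_Mapping.keys m. y $ i)"

lemma mlin_eval_conv_mpoly_eval: "mlin_eval p y = mpoly_eval (mlin_weight y) p"
  by (simp add: mlin_eval_def mpoly_eval_def mlin_weight_def)

lemma mlin_weight_bool_vec:
  "mlin_weight (bool_vec x) m = (if \<forall>i\<in>Poly_Mapping.keys m. x i then 1 else 0)"
  unfolding mlin_weight_def bool_vec_def by (auto simp: prod_zero_iff)

text \<open>keys (a + b) = keys a \<union> keys b for exponent vectors, and products of 0/1 values are
  idempotent: this is where the multilinearization x_i^k \<mapsto> x_i is harmless.\<close>

lemma monomial_hom_mlin_weight_bool_vec: "monomial_hom (mlin_weight (bool_vec x))"
proof -
  have "Poly_Mapping.keys (a + b) = Poly_Mapping.keys a \<union> Poly_Mapping.keys b"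
    for a b :: "'a \<Rightarrow>\<^sub>0 nat"
    by (auto simp: in_keys_iff lookup_add)
  then show ?thesis
    by (auto simp: monomial_hom_def mlin_weight_bool_vec)
qed

lemma mlin_eval_g_poly_bool_vec: "mlin_eval (g_poly E) (bool_vec x) = g_z E (bool_vec x)"
  using monomial_hom_mlin_weight_bool_vec[of x]
  by (simp add: mlin_eval_conv_mpoly_eval g_poly_def g_z_def mpoly_eval_sum mpoly_eval_mult
      mpoly_eval_pconst mpoly_eval_diff mpoly_eval_one mpoly_eval_prod mpoly_eval_pvar mlin_weight_def)

lemma mlin_eval_f_hat_poly_bool_vec:
  "mlin_eval (f_hat_poly L E) (bool_vec x) = h_hat L (g_z E (bool_vec x))"
  using monomial_hom_mlin_weight_bool_vec[of x] mlin_eval_g_poly_bool_vec[of E x]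
  by (simp add: mlin_eval_conv_mpoly_eval f_hat_poly_def h_hat_def mpoly_eval_sum mpoly_eval_mult
      mpoly_eval_pconst mpoly_eval_diff mpoly_eval_power)

section \<open>Expectations over independent Bernoulli coordinates\<close>

definition bernoulli_weight :: "real ^ 'n \<Rightarrow> ('n::finite \<Rightarrow> bool) \<Rightarrow> real" where
  "bernoulli_weight y x = (\<Prod>i\<in>UNIV. if x i then y $ i else 1 - y $ i)"

definition bernoulli_expect :: "real ^ 'n \<Rightarrow> (('n::finite \<Rightarrow> bool) \<Rightarrow> real) \<Rightarrow> real" where
  "bernoulli_expect y F = (\<Sum>x\<in>UNIV. bernoulli_weight y x * F x)"

lemma sum_bool_funs_prod:
  fixes F :: "'n::finite \<Rightarrow> bool \<Rightarrow> 'a::comm_semiring_1"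
  shows "(\<Sum>x\<in>UNIV. \<Prod>i\<in>UNIV. F i (x i)) = (\<Prod>i\<in>UNIV. F i True + F i False)"
proof -
  have "(\<Prod>i\<in>UNIV. \<Sum>b\<in>UNIV. F i b) = (\<Sum>x\<in>PiE UNIV (\<lambda>_. UNIV). \<Prod>i\<in>UNIV. F i (x i))"
    by (rule prod_sum_PiE) auto
  also have "PiE UNIV (\<lambda>_. UNIV) = (UNIV :: ('n \<Rightarrow> bool) set)"
    by (rule PiE_UNIV)
  finally show ?thesis
    by (simp add: UNIV_bool add.commute)
qed

lemma bernoulli_expect_mlin_weight:
  "bernoulli_expect y (\<lambda>x. mlin_weight (bool_vec x) m) = mlin_weight y m"
proof -
  define c where "c i b = (if i \<in> Poly_Mapping.keys m \<and> \<not> b then 0 else 1 :: real)" for i b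
  have "mlin_weight (bool_vec x) m = (\<Prod>i\<in>UNIV. c i (x i))" for x
    by (auto simp: mlin_weight_bool_vec c_def prod_zero_iff intro!: prod.neutral)
  then have "bernoulli_expect y (\<lambda>x. mlin_weight (bool_vec x) m)
      = (\<Sum>x\<in>UNIV. \<Prod>i\<in>UNIV. (if x i then y $ i else 1 - y $ i) * c i (x i))"
    by (simp add: bernoulli_expect_def bernoulli_weight_def prod.distrib)
  also have "\<dots> = (\<Prod>i\<in>UNIV. if i \<in> Poly_Mapping.keys m then y $ i else 1)"
    by (subst sum_bool_funs_prod) (auto simp: c_def intro!: prod.cong)
  also have "\<dots> = mlin_weight y m"
    by (simp add: mlin_weight_def prod.If_cases Int_def)
  finally show ?thesis .
qed

lemma bernoulli_expect_const_one: "bernoulli_expect y (\<lambda>_. 1) = 1"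
  using bernoulli_expect_mlin_weight[of y 0] by (simp add: mlin_weight_def)

lemma bernoulli_weight_nonneg:
  "\<forall>i. 0 \<le> y $ i \<and> y $ i \<le> 1 \<Longrightarrow> 0 \<le> bernoulli_weight y x"
  unfolding bernoulli_weight_def by (intro prod_nonneg) auto

lemma mlin_eval_eq_bernoulli_expect:
  "mlin_eval p y = bernoulli_expect y (\<lambda>x. mlin_eval p (bool_vec x))"
proof -
  have "bernoulli_expect y (\<lambda>x. mlin_eval p (bool_vec x))
      = (\<Sum>m\<in>Poly_Mapping.keys p. Poly_Mapping.lookup p m *
           bernoulli_expect y (\<lambda>x. mlin_weight (bool_vec x) m))"
    by (simp add: bernoulli_expect_def mlin_eval_conv_mpoly_eval mpoly_eval_def
        sum_distrib_left mult_ac sum.swap[where A = UNIV])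
  then show ?thesis
    by (simp add: bernoulli_expect_mlin_weight mlin_eval_conv_mpoly_eval mpoly_eval_def)
qed

lemma G_z_eq_bernoulli_expect: "G_z E y = bernoulli_expect y (\<lambda>x. f_z E (bool_vec x))"
  by (simp add: G_z_def bernoulli_expect_def bernoulli_weight_def bool_vec_def)

lemma bernoulli_expect_abs_diff_le:
  assumes "\<forall>i. 0 \<le> y $ i \<and> y $ i \<le> 1" and "\<And>x. \<bar>F x - F' x\<bar> \<le> B"
  shows "\<bar>bernoulli_expect y F - bernoulli_expect y F'\<bar> \<le> B"
proof -
  have "\<bar>bernoulli_expect y F - bernoulli_expect y F'\<bar>
      = \<bar>\<Sum>x\<in>UNIV. bernoulli_weight y x * (F x - F' x)\<bar>"
    by (simp add: bernoulli_expect_def sum_subtractf right_diff_distrib)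
  also have "\<dots> \<le> (\<Sum>x\<in>UNIV. bernoulli_weight y x * B)"
    using bernoulli_weight_nonneg[OF assms(1)] assms(2)
    by (intro sum_abs[THEN order_trans] sum_mono) (simp add: abs_mult mult_left_mono)
  also have "\<dots> = B"
    using bernoulli_expect_const_one[of y] by (simp add: bernoulli_expect_def sum_distrib_right[symmetric])
  finally show ?thesis .
qed

lemma bernoulli_expect_vupd_affine:
  "bernoulli_expect (vupd y i t) F =
     bernoulli_expect (vupd y i 0) F + t * (bernoulli_expect (vupd y i 1) F - bernoulli_expect (vupd y i 0) F)"
proof -
  define r where "r x = (\<Prod>j\<in>UNIV - {i}. if x j then y $ j else 1 - y $ j)" for x
  have weight: "bernoulli_weight (vupd y i t) x = (if x i then t else 1 - t) * r x" for t x
  proof -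
    have "bernoulli_weight (vupd y i t) x = (if x i then t else 1 - t) *
        (\<Prod>j\<in>UNIV - {i}. if x j then vupd y i t $ j else 1 - vupd y i t $ j)"
      unfolding bernoulli_weight_def by (subst prod.remove[of _ i]) (auto simp: vupd_def)
    also have "(\<Prod>j\<in>UNIV - {i}. if x j then vupd y i t $ j else 1 - vupd y i t $ j) = r x"
      unfolding r_def by (rule prod.cong) (auto simp: vupd_def)
    finally show ?thesis .
  qed
  have "bernoulli_weight (vupd y i t) x * F x = bernoulli_weight (vupd y i 0) x * F x +
      t * (bernoulli_weight (vupd y i 1) x * F x - bernoulli_weight (vupd y i 0) x * F x)" for x
    by (cases "x i") (simp_all add: weight algebra_simps)
  then show ?thesis
    by (simp add: bernoulli_expect_def sum.distrib sum_distrib_left[symmetric] sum_subtractf)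
qed

lemma grad_bernoulli_expect:
  "grad (\<lambda>y. bernoulli_expect y F) y $ i = bernoulli_expect (vupd y i 1) F - bernoulli_expect (vupd y i 0) F"
proof -
  have "((\<lambda>t. bernoulli_expect (vupd y i t) F) has_real_derivative
      bernoulli_expect (vupd y i 1) F - bernoulli_expect (vupd y i 0) F) (at (y $ i))"
    by (subst bernoulli_expect_vupd_affine) (auto intro!: derivative_eq_intros)
  then show ?thesis
    by (simp add: grad_def DERIV_imp_deriv)
qed

section \<open>Taylor expansion of ln (1 + s) at 1/2\<close>

definition h_nth_deriv :: "nat \<Rightarrow> real \<Rightarrow> real" where
  "h_nth_deriv m s = (if m = 0 then ln (1 + s) else (-1) ^ (m + 1) * fact (m - 1) / (1 + s) ^ m)"

lemma h_nth_deriv_has_real_derivative: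
  assumes "s > -1"
  shows "(h_nth_deriv m has_real_derivative h_nth_deriv (Suc m) s) (at s)"
proof (cases m)
  case 0
  show ?thesis
    unfolding 0 h_nth_deriv_def[abs_def] using assms
    by (auto intro!: derivative_eq_intros simp: field_simps)
next
  case (Suc k)
  have "1 + s \<noteq> 0"
    using assms by simp
  have "h_nth_deriv m = (\<lambda>s. (-1) ^ (m + 1) * fact (m - 1) / (1 + s) ^ m)"
    using Suc by (simp add: h_nth_deriv_def[abs_def])
  moreover have "((\<lambda>s. (-1) ^ (m + 1) * fact (m - 1) / (1 + s) ^ m) has_real_derivative
      (-1) ^ (m + 1) * fact (m - 1) * (- (real m * (1 + s) ^ (m - 1)) / ((1 + s) ^ m * (1 + s) ^ m))) (at s)"
    using \<open>1 + s \<noteq> 0\<close> by (auto intro!: derivative_eq_intros)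
  moreover have "(-1) ^ (m + 1) * fact (m - 1) * (- (real m * (1 + s) ^ (m - 1)) / ((1 + s) ^ m * (1 + s) ^ m))
      = h_nth_deriv (Suc m) s"
  proof -
    have "(1 + s) ^ m * (1 + s) ^ m = (1 + s) ^ (m - 1) * (1 + s) ^ Suc m"
      using Suc by (simp add: power_add[symmetric])
    moreover have "fact m = real m * fact (m - 1)"
      using Suc by simp
    ultimately show ?thesis
      using \<open>1 + s \<noteq> 0\<close> by (simp add: h_nth_deriv_def)
  qed
  ultimately show ?thesis
    by (simp only:)
qed

lemma higher_deriv_h: "s > -1 \<Longrightarrow> (deriv ^^ m) h s = h_nth_deriv m s"
proof (induction m arbitrary: s)
  case 0
  then show ?case
    by (simp add: h_def h_nth_deriv_def)
next
  case (Suc m)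
  have "\<forall>\<^sub>F t in nhds s. (deriv ^^ m) h t = h_nth_deriv m t"
    using eventually_nhds_in_open[of "{-1<..}" s] Suc by (auto elim!: eventually_mono)
  then have "deriv ((deriv ^^ m) h) s = deriv (h_nth_deriv m) s"
    by (rule deriv_cong_ev) simp
  then show ?case
    using DERIV_imp_deriv[OF h_nth_deriv_has_real_derivative[OF Suc.prems]] by simp
qed

lemma abs_h_nth_deriv_Suc_le:
  assumes "0 \<le> t"
  shows "\<bar>h_nth_deriv (Suc L) t\<bar> \<le> fact L"
proof -
  have "1 \<le> (1 + t) ^ Suc L"
    using assms by (intro one_le_power) simp
  then show ?thesis
    by (simp add: h_nth_deriv_def abs_mult divide_le_eq mult_le_cancel_left1 del: power_Suc)
qed

lemma h_hat_remainder:
  assumes "0 \<le> s"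
  shows "\<bar>h s - h_hat L s\<bar> \<le> \<bar>s - 1/2\<bar> ^ Suc L / real (Suc L)"
proof (cases "s = 1/2")
  case True
  have "h_hat L (1/2) = h (1/2)"
    by (simp add: h_hat_def taylor_coeff_def sum.atMost_shift)
  then show ?thesis
    unfolding True by simp
next
  case False
  obtain t where t: "if s < 1/2 then s < t \<and> t < 1/2 else 1/2 < t \<and> t < s"
    and taylor: "h s = (\<Sum>m<Suc L. h_nth_deriv m (1/2) / fact m * (s - 1/2) ^ m)
                   + h_nth_deriv (Suc L) t / fact (Suc L) * (s - 1/2) ^ Suc L"
    using Taylor[of "Suc L" h_nth_deriv h 0 "s + 1" "1/2" s] assms False
      h_nth_deriv_has_real_derivative
    by (force simp: h_nth_deriv_def[abs_def] h_def[abs_def])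
  have "0 \<le> t"
    using t assms by (auto split: if_splits)
  have "h_hat L s = (\<Sum>m<Suc L. h_nth_deriv m (1/2) / fact m * (s - 1/2) ^ m)"
    by (simp add: h_hat_def taylor_coeff_def higher_deriv_h lessThan_Suc_atMost)
  then have "\<bar>h s - h_hat L s\<bar> = \<bar>h_nth_deriv (Suc L) t\<bar> / fact (Suc L) * \<bar>s - 1/2\<bar> ^ Suc L"
    using taylor by (simp add: abs_mult power_abs)
  also have "\<dots> \<le> fact L / fact (Suc L) * \<bar>s - 1/2\<bar> ^ Suc L"
    using abs_h_nth_deriv_Suc_le[OF \<open>0 \<le> t\<close>] by (intro mult_right_mono divide_right_mono) auto
  also have "\<dots> = \<bar>s - 1/2\<bar> ^ Suc L / real (Suc L)"
    by (simp add: divide_simps)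
  finally show ?thesis .
qed

lemma h_hat_error_unit_interval:
  assumes "0 \<le> s" "s \<le> 1"
  shows "\<bar>h s - h_hat L s\<bar> \<le> 1 / (real (L + 1) * 2 ^ (L + 1))"
proof -
  have "\<bar>h s - h_hat L s\<bar> \<le> \<bar>s - 1/2\<bar> ^ Suc L / real (Suc L)"
    using assms(1) by (rule h_hat_remainder)
  also have "\<dots> \<le> (1/2) ^ Suc L / real (Suc L)"
    using assms by (intro divide_right_mono power_mono) (auto simp: abs_if)
  also have "\<dots> = 1 / (real (L + 1) * 2 ^ (L + 1))"
    by (simp add: power_one_over)
  finally show ?thesis .
qed

section \<open>The gradient estimate\<close>

lemma g_z_bounds:
  assumes "\<forall>i. 0 \<le> x $ i \<and> x $ i \<le> 1"
  shows "0 \<le> g_z E x \<and> g_z E x \<le> 1"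
proof -
  have prod_bounds: "0 \<le> (\<Prod>i\<in>reach E v. 1 - x $ i) \<and> (\<Prod>i\<in>reach E v. 1 - x $ i) \<le> 1" for v
    using assms by (auto intro!: prod_nonneg prod_le_1)
  have "g_z E x \<le> (\<Sum>v\<in>(UNIV :: 'a set). 1 / real CARD('a))"
    unfolding g_z_def using prod_bounds by (intro sum_mono) (auto intro!: divide_right_mono)
  moreover have "0 \<le> g_z E x"
    unfolding g_z_def using prod_bounds by (intro sum_nonneg) auto
  ultimately show ?thesis
    by simp
qed

lemma G_z_minus_mlin_eval_f_hat_poly:
  assumes "\<forall>i. 0 \<le> y $ i \<and> y $ i \<le> 1"
  shows "\<bar>G_z E y - mlin_eval (f_hat_poly L E) y\<bar> \<le> 1 / (real (L + 1) * 2 ^ (L + 1))"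
proof -
  have "\<bar>f_z E (bool_vec x) - mlin_eval (f_hat_poly L E) (bool_vec x)\<bar>
      \<le> 1 / (real (L + 1) * 2 ^ (L + 1))" for x
  proof -
    have "0 \<le> g_z E (bool_vec x) \<and> g_z E (bool_vec x) \<le> 1"
      by (rule g_z_bounds) (simp add: bool_vec_def)
    then show ?thesis
      unfolding f_z_def mlin_eval_f_hat_poly_bool_vec by (intro h_hat_error_unit_interval) auto
  qed
  then have "\<bar>bernoulli_expect y (\<lambda>x. f_z E (bool_vec x))
      - bernoulli_expect y (\<lambda>x. mlin_eval (f_hat_poly L E) (bool_vec x))\<bar>
      \<le> 1 / (real (L + 1) * 2 ^ (L + 1))"
    by (rule bernoulli_expect_abs_diff_le[OF assms])
  then show ?thesis
    by (simp only: G_z_eq_bernoulli_expect mlin_eval_eq_bernoulli_expect[symmetric])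
qed

lemma norm_le_sqrt_card_cart:
  fixes v :: "real ^ 'n"
  assumes "\<And>i. \<bar>v $ i\<bar> \<le> C"
  shows "norm v \<le> sqrt (real CARD('n)) * C"
proof -
  have "0 \<le> C"
    using assms[of undefined] by linarith
  have "norm v \<le> norm ((\<chi> i. C) :: real ^ 'n)"
    using assms \<open>0 \<le> C\<close> by (intro norm_le_componentwise_cart) simp
  also have "\<dots> = sqrt (real CARD('n) * C\<^sup>2)"
    by (simp add: norm_vec_def L2_set_def)
  also have "\<dots> = sqrt (real CARD('n)) * C"
    using \<open>0 \<le> C\<close> by (simp add: real_sqrt_mult)
  finally show ?thesis .
qed

theorem theorem4:
  fixes E :: "'n::finite \<Rightarrow> 'n \<Rightarrow> bool" and L :: nat and y :: "real ^ 'n"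
  assumes "\<forall>i. 0 \<le> y $ i \<and> y $ i \<le> 1"
  shows "norm (grad (G_z E) y - grad_est L E y)
           \<le> sqrt (real CARD('n)) / (real (L + 1) * 2 ^ L)"
proof -
  let ?B = "1 / (real (L + 1) * 2 ^ (L + 1))"
  have "G_z E = (\<lambda>y. bernoulli_expect y (\<lambda>x. f_z E (bool_vec x)))"
    by (rule ext) (rule G_z_eq_bernoulli_expect)
  then have component: "(grad (G_z E) y - grad_est L E y) $ i =
      (G_z E (vupd y i 1) - mlin_eval (f_hat_poly L E) (vupd y i 1)) -
      (G_z E (vupd y i 0) - mlin_eval (f_hat_poly L E) (vupd y i 0))" for i
    by (simp add: grad_bernoulli_expect grad_est_def)
  have endpoint: "\<bar>G_z E (vupd y i t) - mlin_eval (f_hat_poly L E) (vupd y i t)\<bar> \<le> ?B"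
    if "0 \<le> t" "t \<le> 1" for i t
    using assms that by (intro G_z_minus_mlin_eval_f_hat_poly) (auto simp: vupd_def)
  have "2 * ?B = 1 / (real (L + 1) * 2 ^ L)"
    by simp
  then have "\<bar>(grad (G_z E) y - grad_est L E y) $ i\<bar> \<le> 1 / (real (L + 1) * 2 ^ L)" for i
    unfolding component using endpoint[of 0 i] endpoint[of 1 i] by linarith
  then have "norm (grad (G_z E) y - grad_est L E y) \<le> sqrt (real CARD('n)) * (1 / (real (L + 1) * 2 ^ L))"
    by (rule norm_le_sqrt_card_cart)
  then show ?thesis
    by simp
qed

end
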